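(* Let $T_1\in\mathcal L(\mathcal H_1)$ and $T_2\in\mathcal L(\mathcal H_2)$ be invertible, and let $T\in\mathcal L(\mathcal H_1\oplus\mathcal H_2)$ have the block form $T=\begin{pmatrix}T_1&\ast\\0&T_2\end{pmatrix}$. Then for every $n\geq0$, $$\|T^{-n}\|\leq\max(1,\|T_1^{-n}\|)\cdot\max(1,\|T_2^{-n}\|)\cdot\bigl(\max(2,2\|T^n\|^2+1)\bigr)^{1/2}.$$
   Context: $\ast$ denotes an arbitrary bounded operator from $\mathcal H_2$ to $\mathcal H_1$; under these assumptions $T$ is invertible. *)

theory Defs
  imports "HOL-Analysis.Analysis"
begin

definition blpow :: "('a::real_normed_vector \<Rightarrow>\<^sub>L 'a) \<Rightarrow> nat \<Rightarrow> ('a \<Rightarrow>\<^sub>L 'a)" where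
  "blpow A n = ((\<lambda>B. A o\<^sub>L B) ^^ n) id_blinfun"

end

theory Submission
  imports Defs
begin

text \<open>
  Powers and inverses of a block upper triangular operator are block upper triangular, with
  the corresponding powers and inverses on the diagonal. If \<open>T\<^sup>n\<close> has the blocks
  \<open>T\<^sub>1\<^sup>n, R, 0, T\<^sub>2\<^sup>n\<close>, then \<open>T\<^sup>-\<^sup>n\<close> has the blocks
  \<open>T\<^sub>1\<^sup>-\<^sup>n, -T\<^sub>1\<^sup>-\<^sup>n R T\<^sub>2\<^sup>-\<^sup>n, 0, T\<^sub>2\<^sup>-\<^sup>n\<close>, and the corner \<open>R\<close>
  is a compression of \<open>T\<^sup>n\<close>, so \<open>\<parallel>R\<parallel> \<le> \<parallel>T\<^sup>n\<parallel>\<close>. The bound then follows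
  from \<open>(s + t)\<^sup>2 \<le> 2s\<^sup>2 + 2t\<^sup>2\<close> applied to the first component.
\<close>

definition upper_triangular ::
    "(('a::real_normed_vector \<times> 'b::real_normed_vector) \<Rightarrow>\<^sub>L ('a \<times> 'b))
      \<Rightarrow> ('a \<Rightarrow>\<^sub>L 'a) \<Rightarrow> ('b \<Rightarrow>\<^sub>L 'b) \<Rightarrow> bool"
  where "upper_triangular U U1 U2 \<longleftrightarrow>
    (\<forall>x. blinfun_apply U (x, 0) = (U1 x, 0)) \<and> (\<forall>x y. snd (blinfun_apply U (x, y)) = U2 y)"

lemma blpow_Suc: "blpow A (Suc n) = A o\<^sub>L blpow A n"
  by (simp add: blpow_def)

lemma blpow_apply: "blinfun_apply (blpow A n) = blinfun_apply A ^^ n"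
  by (induction n) (auto simp: blpow_def)

lemma blpow_right_inverse:
  assumes "A o\<^sub>L B = id_blinfun"
  shows "blpow A n o\<^sub>L blpow B n = id_blinfun"
proof (rule blinfun_eqI)
  have AB: "A (B x) = x" for x
    using assms by (metis blinfun_apply_blinfun_compose blinfun_apply_id_blinfun)
  have "(blinfun_apply A ^^ n) ((blinfun_apply B ^^ n) x) = x" for x
  proof (induction n arbitrary: x)
    case (Suc n)
    have "(blinfun_apply A ^^ Suc n) ((blinfun_apply B ^^ Suc n) x)
        = (blinfun_apply A ^^ n) (A (B ((blinfun_apply B ^^ n) x)))"
      by (simp only: funpow_Suc_right[of n "blinfun_apply A"] funpow.simps(2)[of n "blinfun_apply B"]
          comp_apply)
    then show ?case
      by (simp add: AB Suc.IH)
  qed simp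
  then show "(blpow A n o\<^sub>L blpow B n) x = id_blinfun x" for x
    by (simp add: blpow_apply)
qed

lemma upper_triangular_id: "upper_triangular id_blinfun id_blinfun id_blinfun"
  by (simp add: upper_triangular_def)

lemma upper_triangular_compose:
  assumes "upper_triangular U U1 U2" "upper_triangular V V1 V2"
  shows "upper_triangular (U o\<^sub>L V) (U1 o\<^sub>L V1) (U2 o\<^sub>L V2)"
proof -
  have "snd (U (V (x, y))) = U2 (V2 y)" for x y
    using assms by (metis prod.collapse upper_triangular_def)
  then show ?thesis
    using assms by (simp add: upper_triangular_def)
qed

lemma upper_triangular_blpow:
  assumes "upper_triangular U U1 U2"
  shows "upper_triangular (blpow U n) (blpow U1 n) (blpow U2 n)"
proof (induction n)
  case 0
  show ?case
    using upper_triangular_id by (simp add: blpow_def)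
next
  case (Suc n)
  show ?case
    unfolding blpow_Suc using assms Suc.IH by (rule upper_triangular_compose)
qed

lemma upper_triangular_apply:
  assumes "upper_triangular U U1 U2"
  shows "U (x, y) = (U1 x + fst (U (0, y)), U2 y)"
proof -
  have "U (x, y) = U (x, 0) + U (0, y)"
    by (metis add.left_neutral add.right_neutral add_Pair blinfun.add_right)
  also have "\<dots> = (U1 x, 0) + (fst (U (0, y)), U2 y)"
    using assms by (simp add: upper_triangular_def prod_eq_iff)
  finally show ?thesis
    by simp
qed

lemma upper_triangular_inverse_apply:
  assumes U: "upper_triangular U U1 U2" and V: "upper_triangular V V1 V2"
    and "U o\<^sub>L V = id_blinfun" "V1 o\<^sub>L U1 = id_blinfun"
  shows "V (x, y) = (V1 x - V1 (fst (U (0, V2 y))), V2 y)"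
proof -
  define r where "r = fst (V (0, y))"
  have V0: "V (0, y) = (r, V2 y)"
    using upper_triangular_apply[OF V, of 0 y] by (simp add: r_def)
  have "(0, y) = U (V (0, y))"
    using assms(3) by (metis blinfun_apply_blinfun_compose blinfun_apply_id_blinfun)
  also have "\<dots> = (U1 r + fst (U (0, V2 y)), U2 (V2 y))"
    unfolding V0 by (rule upper_triangular_apply[OF U])
  finally have "U1 r = - fst (U (0, V2 y))"
    by (simp add: eq_neg_iff_add_eq_0)
  then have "r = - V1 (fst (U (0, V2 y)))"
    using assms(4) by (metis blinfun.minus_right blinfun_apply_blinfun_compose blinfun_apply_id_blinfun)
  then show ?thesis
    using upper_triangular_apply[OF V, of x y] by (simp add: r_def)
qed

lemma upper_triangular_inverse_exists:
  fixes T1 T1i :: "'a::real_normed_vector \<Rightarrow>\<^sub>L 'a"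
    and T2 T2i :: "'b::real_normed_vector \<Rightarrow>\<^sub>L 'b"
    and S :: "'b \<Rightarrow>\<^sub>L 'a" and T :: "('a \<times> 'b) \<Rightarrow>\<^sub>L ('a \<times> 'b)"
  assumes "T1 o\<^sub>L T1i = id_blinfun" "T1i o\<^sub>L T1 = id_blinfun"
    and "T2 o\<^sub>L T2i = id_blinfun" "T2i o\<^sub>L T2 = id_blinfun"
    and T_block: "\<And>x y. T (x, y) = (T1 x + S y, T2 y)"
  obtains Ti where "T o\<^sub>L Ti = id_blinfun" "Ti o\<^sub>L T = id_blinfun" "upper_triangular Ti T1i T2i"
proof
  have T1: "\<And>x. T1 (T1i x) = x" "\<And>x. T1i (T1 x) = x"
    and T2: "\<And>x. T2 (T2i x) = x" "\<And>x. T2i (T2 x) = x"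
    using assms(1-4) by (metis blinfun_apply_blinfun_compose blinfun_apply_id_blinfun)+
  define f where "f = (\<lambda>(x, y). (T1i x - T1i (S (T2i y)), T2i y))"
  have "bounded_linear f"
    unfolding f_def case_prod_beta
    by (intro bounded_linear_Pair bounded_linear_sub
        bounded_linear_compose[OF blinfun.bounded_linear_right]
        bounded_linear_fst bounded_linear_snd)
  then have Ti: "Blinfun f (x, y) = (T1i x - T1i (S (T2i y)), T2i y)" for x y
    by (simp add: bounded_linear_Blinfun_apply f_def)
  show "T o\<^sub>L Blinfun f = id_blinfun"
    by (rule blinfun_eqI) (auto simp: Ti T_block T1 T2 blinfun.diff_right)
  show "Blinfun f o\<^sub>L T = id_blinfun"
    by (rule blinfun_eqI) (auto simp: Ti T_block T1 T2 blinfun.add_right)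
  show "upper_triangular (Blinfun f) T1i T2i"
    by (simp add: upper_triangular_def Ti)
qed

lemma sum_squares_bound:
  fixes a b p u v :: real
  assumes "0 \<le> a" "0 \<le> b" "0 \<le> p"
  shows "(a * u + a * (p * (b * v)))\<^sup>2 + (b * v)\<^sup>2
    \<le> (max 1 a * max 1 b)\<^sup>2 * max 2 (2 * p\<^sup>2 + 1) * (u\<^sup>2 + v\<^sup>2)"
proof -
  define M where "M = (max 1 a * max 1 b)\<^sup>2"
  define K where "K = max 2 (2 * p\<^sup>2 + 1)"
  have "a \<le> max 1 a * max 1 b" "b \<le> max 1 a * max 1 b" "a * b \<le> max 1 a * max 1 b"
    using assms by (auto intro: order_trans[OF _ mult_right_mono[of 1]]
        order_trans[OF _ mult_left_mono[of 1]] mult_mono)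
  then have a: "a\<^sup>2 \<le> M" and b: "b\<^sup>2 \<le> M" and ab: "a\<^sup>2 * b\<^sup>2 \<le> M"
    using assms unfolding M_def power_mult_distrib[symmetric] by (auto intro: power_mono)
  have "(a * u + a * (p * (b * v)))\<^sup>2 + (b * v)\<^sup>2 \<le> 2 * a\<^sup>2 * u\<^sup>2 + (2 * p\<^sup>2 * (a\<^sup>2 * b\<^sup>2) + b\<^sup>2) * v\<^sup>2"
    using zero_le_power2[of "a * u - a * (p * (b * v))"]
    by (simp add: power2_eq_square algebra_simps)
  also have "\<dots> \<le> 2 * M * u\<^sup>2 + (2 * p\<^sup>2 * M + M) * v\<^sup>2"
    using a b ab by (intro add_mono mult_right_mono mult_left_mono) auto
  also have "\<dots> \<le> M * K * u\<^sup>2 + M * K * v\<^sup>2"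
  proof -
    have "0 \<le> M" "2 \<le> K" "2 * p\<^sup>2 + 1 \<le> K"
      by (simp_all add: M_def K_def)
    then have "2 * M \<le> M * K" "2 * p\<^sup>2 * M + M \<le> M * K"
      using mult_left_mono[of 2 K M] mult_left_mono[of "2 * p\<^sup>2 + 1" K M] by (simp_all add: algebra_simps)
    then show ?thesis
      by (intro add_mono mult_right_mono) auto
  qed
  finally show ?thesis
    by (simp add: M_def K_def algebra_simps)
qed

lemma norm_fst_apply_Pair_zero:
  fixes U :: "('a::real_normed_vector \<times> 'b::real_normed_vector) \<Rightarrow>\<^sub>L ('c::real_normed_vector \<times> 'd::real_normed_vector)"
  shows "norm (fst (U (0, z))) \<le> norm U * norm z"
proof -
  have "norm (fst (U (0, z))) \<le> norm (U (0, z))"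
    by (metis norm_fst_le prod.collapse)
  also have "\<dots> \<le> norm U * norm (0::'a, z)"
    by (rule norm_blinfun)
  finally show ?thesis
    by (simp add: norm_Pair)
qed

lemma norm_upper_triangular_inverse_le:
  fixes V :: "('a::real_normed_vector \<times> 'b::real_normed_vector) \<Rightarrow>\<^sub>L ('a \<times> 'b)"
    and V1 :: "'a \<Rightarrow>\<^sub>L 'a" and V2 :: "'b \<Rightarrow>\<^sub>L 'b"
  assumes V: "\<And>x y. V (x, y) = (V1 x - V1 (W y), V2 y)"
    and W: "\<And>y. norm (W y) \<le> p * norm (V2 y)" and "0 \<le> p"
  shows "norm V \<le> max 1 (norm V1) * max 1 (norm V2) * sqrt (max 2 (2 * p\<^sup>2 + 1))"
proof (rule norm_blinfun_bound)
  define C where "C = max 1 (norm V1) * max 1 (norm V2) * sqrt (max 2 (2 * p\<^sup>2 + 1))"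
  show "0 \<le> C"
    by (simp add: C_def)
  show "norm (V z) \<le> C * norm z" for z
  proof -
    obtain x y where z: "z = (x, y)"
      by fastforce
    define a b where "a = norm V1" and "b = norm V2"
    have V2y: "norm (V2 y) \<le> b * norm y"
      unfolding b_def by (rule norm_blinfun)
    have "norm (W y) \<le> p * (b * norm y)"
      using W[of y] mult_left_mono[OF V2y \<open>0 \<le> p\<close>] by linarith
    then have "norm (V1 (W y)) \<le> a * (p * (b * norm y))"
      using norm_blinfun[of V1 "W y"] mult_left_mono[of _ _ a] unfolding a_def by force
    moreover have "norm (V1 x) \<le> a * norm x"
      unfolding a_def by (rule norm_blinfun)
    ultimately have V1: "norm (V1 x - V1 (W y)) \<le> a * norm x + a * (p * (b * norm y))"
      by (meson add_mono norm_triangle_ineq4 order_trans)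
    have "(norm (V z))\<^sup>2 = (norm (V1 x - V1 (W y)))\<^sup>2 + (norm (V2 y))\<^sup>2"
      by (simp add: z V norm_Pair)
    also have "\<dots> \<le> (a * norm x + a * (p * (b * norm y)))\<^sup>2 + (b * norm y)\<^sup>2"
      using V1 V2y by (intro add_mono power_mono) simp_all
    also have "\<dots> \<le> (max 1 a * max 1 b)\<^sup>2 * max 2 (2 * p\<^sup>2 + 1) * ((norm x)\<^sup>2 + (norm y)\<^sup>2)"
      using \<open>0 \<le> p\<close> by (intro sum_squares_bound) (simp_all add: a_def b_def)
    also have "\<dots> = (C * norm z)\<^sup>2"
      by (simp add: C_def a_def b_def z norm_Pair power_mult_distrib)
    finally show ?thesis
      by (rule power2_le_imp_le) (simp add: \<open>0 \<le> C\<close>)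
  qed
qed

theorem lemma7p9:
  fixes T1 T1i :: "'a::{real_inner, complete_space} \<Rightarrow>\<^sub>L 'a"
    and T2 T2i :: "'b::{real_inner, complete_space} \<Rightarrow>\<^sub>L 'b"
    and S :: "'b \<Rightarrow>\<^sub>L 'a"
    and T :: "('a \<times> 'b) \<Rightarrow>\<^sub>L ('a \<times> 'b)"
  assumes T1_inv: "T1 o\<^sub>L T1i = id_blinfun" "T1i o\<^sub>L T1 = id_blinfun"
    and T2_inv: "T2 o\<^sub>L T2i = id_blinfun" "T2i o\<^sub>L T2 = id_blinfun"
    and T_block: "\<And>x y. blinfun_apply T (x, y) = (blinfun_apply T1 x + blinfun_apply S y, blinfun_apply T2 y)"
  shows "\<exists>Ti :: ('a \<times> 'b) \<Rightarrow>\<^sub>L ('a \<times> 'b).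
           T o\<^sub>L Ti = id_blinfun \<and> Ti o\<^sub>L T = id_blinfun \<and>
           (\<forall>n::nat. norm (blpow Ti n)
              \<le> max 1 (norm (blpow T1i n)) * max 1 (norm (blpow T2i n))
                 * sqrt (max 2 (2 * (norm (blpow T n))^2 + 1)))"
proof -
  obtain Ti where Ti: "T o\<^sub>L Ti = id_blinfun" "Ti o\<^sub>L T = id_blinfun" "upper_triangular Ti T1i T2i"
    using upper_triangular_inverse_exists[OF T1_inv T2_inv T_block] by blast
  have "upper_triangular T T1 T2"
    by (simp add: upper_triangular_def T_block)
  have "norm (blpow Ti n) \<le> max 1 (norm (blpow T1i n)) * max 1 (norm (blpow T2i n))
      * sqrt (max 2 (2 * (norm (blpow T n))\<^sup>2 + 1))" for n
  proof (rule norm_upper_triangular_inverse_le)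
    show "blpow Ti n (x, y)
        = (blpow T1i n x - blpow T1i n (fst (blpow T n (0, blpow T2i n y))), blpow T2i n y)" for x y
      using upper_triangular_blpow[OF \<open>upper_triangular T T1 T2\<close>] upper_triangular_blpow[OF Ti(3)]
        blpow_right_inverse[OF Ti(1)] blpow_right_inverse[OF T1_inv(2)]
      by (rule upper_triangular_inverse_apply)
  qed (simp_all add: norm_fst_apply_Pair_zero)
  with Ti show ?thesis
    by blast
qed

end
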